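(* Let $U:\mathbb{R}^d\to\mathbb{R}$ be twice continuously differentiable with $\nabla U(0)=0$ and $\sup_x\|\mathrm{D}^2U(x)\|\le\mathtt{L}$, and assume there exist $\mathtt{m}>0$, $\mathtt{K}\ge0$ with $\mathrm{D}^2U(x)[y,y]\ge\mathtt{m}$ whenever $\|x\|\ge\mathtt{K}$, $\|y\|=1$. Then for all $x,y\in\mathbb{R}^d$ with $\|x\|\vee\|y\|\ge\mathtt{K}+8\mathtt{K}\mathtt{L}/\mathtt{m}$, $$\langle\nabla U(x)-\nabla U(y),x-y\rangle\ge(\mathtt{m}/2)\|x-y\|^2.$$ *)

theory Defs
  imports "HOL-Analysis.Analysis"
begin

end

theory Submission
  imports Defs
begin

text \<open>
  Fix \<open>x\<close> with \<open>\<parallel>x\<parallel> \<ge> K + 8KL/m\<close>, put \<open>v = x - y\<close> and differentiate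
  \<open>f t = \<langle>\<nabla>U (y + t v), v\<rangle>\<close>: its derivative \<open>D\<^sup>2U (y + t v)[v, v]\<close> is at least
  \<open>-L\<parallel>v\<parallel>\<^sup>2\<close> everywhere and at least \<open>m\<parallel>v\<parallel>\<^sup>2\<close> outside the ball of radius \<open>K\<close>.
  Since \<open>\<langle>y + t v, v\<rangle>\<close> grows with slope \<open>\<parallel>v\<parallel>\<^sup>2\<close>, the line meets that ball in a
  parameter interval of length at most \<open>2K/\<parallel>v\<parallel>\<close>, whence
  \<open>f 1 - f 0 \<ge> m\<parallel>v\<parallel>\<^sup>2 - 2K(L + m)\<parallel>v\<parallel>\<close>. If the segment avoids the ball the bound
  \<open>m\<parallel>v\<parallel>\<^sup>2\<close> is immediate; otherwise \<open>\<parallel>v\<parallel> \<ge> \<parallel>x\<parallel> - K \<ge> 8KL/m\<close>, and with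
  \<open>m \<le> L\<close> the loss term is at most \<open>(m/2)\<parallel>v\<parallel>\<^sup>2\<close>.
\<close>

lemma increment_ge_of_deriv_ge:
  fixes f f' :: "real \<Rightarrow> real"
  assumes "a \<le> b"
    and deriv: "\<And>t. (f has_real_derivative f' t) (at t)"
    and lower: "\<And>t. a < t \<Longrightarrow> t < b \<Longrightarrow> c \<le> f' t"
  shows "c * (b - a) \<le> f b - f a"
proof (cases "a = b")
  case False
  with \<open>a \<le> b\<close> have "a < b" by simp
  with MVT2[of a b f f'] deriv obtain z where "a < z" "z < b" "f b - f a = (b - a) * f' z"
    by blast
  then show ?thesis using lower[of z] \<open>a < b\<close> by (simp add: mult.commute mult_right_mono)
qed simp

lemma increment_ge_of_deriv_ge_off_interval:
  fixes f f' :: "real \<Rightarrow> real"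
  assumes "a \<le> b"
    and deriv: "\<And>t. (f has_real_derivative f' t) (at t)"
    and lower: "\<And>t. 0 \<le> t \<Longrightarrow> t \<le> 1 \<Longrightarrow> - A \<le> f' t"
    and lower_off: "\<And>t. 0 \<le> t \<Longrightarrow> t \<le> 1 \<Longrightarrow> t \<le> a \<or> b \<le> t \<Longrightarrow> B \<le> f' t"
    and "A + B \<ge> 0"
  shows "B - (A + B) * (b - a) \<le> f 1 - f 0"
proof -
  define a' where "a' = max 0 (min 1 a)"
  define b' where "b' = max 0 (min 1 b)"
  have clipped: "0 \<le> a'" "a' \<le> b'" "b' \<le> 1" "b' - a' \<le> b - a"
    using \<open>a \<le> b\<close> unfolding a'_def b'_def by auto
  have "B * (a' - 0) \<le> f a' - f 0"
    by (rule increment_ge_of_deriv_ge[OF clipped(1) deriv]) (rule lower_off, auto simp: a'_def)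
  moreover have "(- A) * (b' - a') \<le> f b' - f a'"
    by (rule increment_ge_of_deriv_ge[OF clipped(2) deriv]) (rule lower, use clipped in auto)
  moreover have "B * (1 - b') \<le> f 1 - f b'"
    by (rule increment_ge_of_deriv_ge[OF clipped(3) deriv]) (rule lower_off, auto simp: b'_def)
  moreover have "(A + B) * (b' - a') \<le> (A + B) * (b - a)"
    using clipped(4) \<open>A + B \<ge> 0\<close> by (rule mult_left_mono)
  ultimately show ?thesis by (simp add: algebra_simps)
qed

lemma abs_inner_blinfun_self_le:
  fixes A :: "'a::real_inner \<Rightarrow>\<^sub>L 'a"
  shows "\<bar>A w \<bullet> w\<bar> \<le> norm A * (norm w)\<^sup>2"
proof -
  have "\<bar>A w \<bullet> w\<bar> \<le> norm (A w) * norm w" by (rule Cauchy_Schwarz_ineq2)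
  also have "\<dots> \<le> norm A * norm w * norm w"
    by (rule mult_right_mono[OF norm_blinfun norm_ge_zero])
  finally show ?thesis by (simp add: power2_eq_square mult.assoc)
qed

lemma inner_blinfun_self_ge_of_unit:
  fixes A :: "'a::real_inner \<Rightarrow>\<^sub>L 'a"
  assumes unit: "\<And>u. norm u = 1 \<Longrightarrow> m \<le> A u \<bullet> u"
  shows "m * (norm w)\<^sup>2 \<le> A w \<bullet> w"
proof (cases "w = 0")
  case False
  define u where "u = w /\<^sub>R norm w"
  have "norm u = 1" using False by (simp add: u_def)
  have "w = norm w *\<^sub>R u" using False by (simp add: u_def)
  then have "A w \<bullet> w = (A u \<bullet> u) * (norm w)\<^sup>2"
    by (metis blinfun.scaleR_right inner_scaleR_left inner_scaleR_right mult.assoc mult.commute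
        power2_eq_square)
  then show ?thesis
    using mult_right_mono[OF unit[OF \<open>norm u = 1\<close>] zero_le_power2] by simp
qed simp

lemma has_real_derivative_inner_along_line:
  assumes "(g has_derivative blinfun_apply G) (at (y + t *\<^sub>R v))"
  shows "((\<lambda>s. g (y + s *\<^sub>R v) \<bullet> v) has_real_derivative G v \<bullet> v) (at t)"
proof -
  have "((\<lambda>s. y + s *\<^sub>R v) has_derivative (\<lambda>h. h *\<^sub>R v)) (at t)"
    by (auto intro!: derivative_eq_intros)
  from has_derivative_compose[OF this assms]
  have "((\<lambda>s. g (y + s *\<^sub>R v)) has_derivative (\<lambda>h. G (h *\<^sub>R v))) (at t)" .
  from bounded_linear.has_derivative[OF bounded_linear_inner_left this, of v]
  show ?thesis
    by (rule has_derivative_imp_has_field_derivative) (simp add: blinfun.scaleR_right)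
qed

lemma line_in_ball_imp_parameter_bounds:
  fixes y v :: "'a::real_inner"
  assumes "v \<noteq> 0" and "norm (y + t *\<^sub>R v) < K"
  shows "(- K * norm v - y \<bullet> v) / (norm v)\<^sup>2 < t" and "t < (K * norm v - y \<bullet> v) / (norm v)\<^sup>2"
proof -
  have "\<bar>y \<bullet> v + t * (norm v)\<^sup>2\<bar> = \<bar>(y + t *\<^sub>R v) \<bullet> v\<bar>"
    by (simp add: inner_add_left power2_norm_eq_inner)
  also have "\<dots> \<le> norm (y + t *\<^sub>R v) * norm v" by (rule Cauchy_Schwarz_ineq2)
  also have "\<dots> < K * norm v" using assms by simp
  finally have "- K * norm v - y \<bullet> v < t * (norm v)\<^sup>2" "t * (norm v)\<^sup>2 < K * norm v - y \<bullet> v"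
    by linarith+
  with \<open>v \<noteq> 0\<close> show "(- K * norm v - y \<bullet> v) / (norm v)\<^sup>2 < t" "t < (K * norm v - y \<bullet> v) / (norm v)\<^sup>2"
    by (simp_all add: divide_less_eq less_divide_eq)
qed

lemma inner_blinfun_self_ge_le_norm:
  fixes A :: "'a::euclidean_space \<Rightarrow>\<^sub>L 'a"
  assumes "\<And>u. norm u = 1 \<Longrightarrow> m \<le> A u \<bullet> u"
  shows "m \<le> norm A"
proof -
  obtain u :: 'a where "norm u = 1" using vector_choose_size[of 1] by auto
  then have "m \<le> A u \<bullet> u" by (rule assms)
  also have "\<dots> \<le> norm A" using abs_inner_blinfun_self_le[of A u] \<open>norm u = 1\<close> by simp
  finally show ?thesis .
qed

lemma gradient_increment_ge_segment_outside_ball: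
  fixes g :: "'a::real_inner \<Rightarrow> 'a"
  assumes hess: "\<And>z. (g has_derivative blinfun_apply (H z)) (at z)"
    and convex_out: "\<And>z u. norm z \<ge> K \<Longrightarrow> norm u = 1 \<Longrightarrow> m \<le> H z u \<bullet> u"
    and outside: "\<And>t. 0 < t \<Longrightarrow> t < 1 \<Longrightarrow> norm (y + t *\<^sub>R v) \<ge> K"
  shows "m * (norm v)\<^sup>2 \<le> (g (y + v) - g y) \<bullet> v"
proof -
  have "m * (norm v)\<^sup>2 * (1 - 0) \<le> g (y + 1 *\<^sub>R v) \<bullet> v - g (y + 0 *\<^sub>R v) \<bullet> v"
  proof (rule increment_ge_of_deriv_ge[OF _ has_real_derivative_inner_along_line[OF hess]])
    fix t :: real assume "0 < t" "t < 1"
    from outside[OF this] show "m * (norm v)\<^sup>2 \<le> H (y + t *\<^sub>R v) v \<bullet> v"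
      using convex_out by (intro inner_blinfun_self_ge_of_unit)
  qed simp
  then show ?thesis by (simp add: inner_diff_left)
qed

lemma gradient_increment_ge:
  fixes g :: "'a::real_inner \<Rightarrow> 'a"
  assumes hess: "\<And>z. (g has_derivative blinfun_apply (H z)) (at z)"
    and hess_bound: "\<And>z. norm (H z) \<le> L"
    and convex_out: "\<And>z u. norm z \<ge> K \<Longrightarrow> norm u = 1 \<Longrightarrow> m \<le> H z u \<bullet> u"
    and "0 \<le> K" "0 \<le> m"
  shows "m * (norm v)\<^sup>2 - 2 * K * (L + m) * norm v \<le> (g (y + v) - g y) \<bullet> v"
proof (cases "v = 0")
  case False
  define a where "a = (- K * norm v - y \<bullet> v) / (norm v)\<^sup>2"
  define b where "b = (K * norm v - y \<bullet> v) / (norm v)\<^sup>2"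
  have width: "b - a = 2 * K / norm v"
    using False by (simp add: a_def b_def field_simps power2_eq_square)
  have "0 \<le> L" using hess_bound[of 0] norm_ge_zero order_trans by blast
  have "m * (norm v)\<^sup>2 - (L * (norm v)\<^sup>2 + m * (norm v)\<^sup>2) * (b - a)
      \<le> g (y + 1 *\<^sub>R v) \<bullet> v - g (y + 0 *\<^sub>R v) \<bullet> v"
  proof (rule increment_ge_of_deriv_ge_off_interval[OF _ has_real_derivative_inner_along_line[OF hess]])
    have "0 \<le> 2 * K / norm v" using \<open>0 \<le> K\<close> by simp
    with width show "a \<le> b" by linarith
  next
    fix t :: real
    show "- (L * (norm v)\<^sup>2) \<le> H (y + t *\<^sub>R v) v \<bullet> v"
      using abs_inner_blinfun_self_le[of "H (y + t *\<^sub>R v)" v]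
        mult_right_mono[OF hess_bound zero_le_power2, of "y + t *\<^sub>R v" "norm v"]
      by simp
    assume "t \<le> a \<or> b \<le> t"
    then have "\<not> norm (y + t *\<^sub>R v) < K"
      using line_in_ball_imp_parameter_bounds[OF False] unfolding a_def b_def by fastforce
    then show "m * (norm v)\<^sup>2 \<le> H (y + t *\<^sub>R v) v \<bullet> v"
      using convex_out by (intro inner_blinfun_self_ge_of_unit) simp
  qed (use \<open>0 \<le> L\<close> \<open>0 \<le> m\<close> in simp)
  moreover have "(L * (norm v)\<^sup>2 + m * (norm v)\<^sup>2) * (b - a) = 2 * K * (L + m) * norm v"
    using False unfolding width by (simp add: power2_eq_square field_simps)
  ultimately show ?thesis by (simp add: inner_diff_left)
qed simp

lemma gradient_monotone_far_from_origin:
  fixes gradU :: "'a::euclidean_space \<Rightarrow> 'a"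
    and H :: "'a \<Rightarrow> 'a \<Rightarrow>\<^sub>L 'a"
  assumes hess: "\<And>x. (gradU has_derivative blinfun_apply (H x)) (at x)"
    and hess_bound: "\<And>x. norm (H x) \<le> L"
    and m_pos: "m > 0"
    and K_nonneg: "K \<ge> 0"
    and convex_out: "\<And>x y. norm x \<ge> K \<Longrightarrow> norm y = 1 \<Longrightarrow> (H x y) \<bullet> y \<ge> m"
    and far: "norm x \<ge> K + 8 * K * L / m"
  shows "m / 2 * (norm (x - y))\<^sup>2 \<le> (gradU x - gradU y) \<bullet> (x - y)"
proof -
  define v where "v = x - y"
  show ?thesis
  proof (cases "norm v \<le> norm x - K")
    case True
    have "m * (norm v)\<^sup>2 \<le> (gradU (y + v) - gradU y) \<bullet> v"
    proof (rule gradient_increment_ge_segment_outside_ball[OF hess convex_out])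
      fix t :: real assume "0 < t" "t < 1"
      then have "norm ((1 - t) *\<^sub>R v) \<le> norm v" by (simp add: mult_left_le_one_le)
      moreover have "y + t *\<^sub>R v = x - (1 - t) *\<^sub>R v" by (simp add: v_def algebra_simps)
      ultimately show "K \<le> norm (y + t *\<^sub>R v)"
        using norm_triangle_ineq2[of x "(1 - t) *\<^sub>R v"] True by simp
    qed
    moreover have "m / 2 * (norm v)\<^sup>2 \<le> m * (norm v)\<^sup>2" using m_pos by simp
    ultimately show ?thesis unfolding v_def by simp
  next
    case False
    obtain z :: 'a where "norm z = K" using vector_choose_size[OF K_nonneg] by blast
    then have "m \<le> norm (H z)" using convex_out[of z] by (intro inner_blinfun_self_ge_le_norm) simp
    then have "m \<le> L" using hess_bound by (rule order_trans)
    then have "4 * K * (L + m) \<le> 8 * K * L"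
      using mult_left_mono[of "L + m" "2 * L" "4 * K"] K_nonneg by simp
    also have "\<dots> \<le> m * (norm x - K)" using far m_pos by (simp add: field_simps)
    also have "\<dots> \<le> m * norm v" using False m_pos by simp
    finally have "4 * K * (L + m) * norm v \<le> m * norm v * norm v"
      by (simp add: mult_right_mono)
    then have "m / 2 * (norm v)\<^sup>2 \<le> m * (norm v)\<^sup>2 - 2 * K * (L + m) * norm v"
      by (simp add: power2_eq_square algebra_simps)
    also have "\<dots> \<le> (gradU (y + v) - gradU y) \<bullet> v"
      using gradient_increment_ge[OF hess hess_bound convex_out K_nonneg] m_pos by simp
    finally show ?thesis unfolding v_def by simp
  qed
qed

theorem lemma9:
  fixes U :: "'a::euclidean_space \<Rightarrow> real"
    and gradU :: "'a \<Rightarrow> 'a"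
    and H :: "'a \<Rightarrow> 'a \<Rightarrow>\<^sub>L 'a"
    and L m K :: real
  assumes grad: "\<And>x. (U has_derivative (\<lambda>h. gradU x \<bullet> h)) (at x)"
    and hess: "\<And>x. (gradU has_derivative blinfun_apply (H x)) (at x)"
    and hess_cont: "continuous_on UNIV H"
    and grad0: "gradU 0 = 0"
    and hess_bound: "\<And>x. norm (H x) \<le> L"
    and m_pos: "m > 0"
    and K_nonneg: "K \<ge> 0"
    and convex_out: "\<And>x y. norm x \<ge> K \<Longrightarrow> norm y = 1 \<Longrightarrow> (H x y) \<bullet> y \<ge> m"
  shows "\<forall>x y. max (norm x) (norm y) \<ge> K + 8 * K * L / m \<longrightarrow>
           (gradU x - gradU y) \<bullet> (x - y) \<ge> (m / 2) * (norm (x - y))\<^sup>2"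
proof -
  have far_monotone: "m / 2 * (norm (x - y))\<^sup>2 \<le> (gradU x - gradU y) \<bullet> (x - y)"
    if "norm x \<ge> K + 8 * K * L / m" for x y
    using gradient_monotone_far_from_origin[OF hess hess_bound m_pos K_nonneg _ that] convex_out
    by blast
  show ?thesis
  proof (intro allI impI)
    fix x y :: 'a
    assume "max (norm x) (norm y) \<ge> K + 8 * K * L / m"
    then consider "norm x \<ge> K + 8 * K * L / m" | "norm y \<ge> K + 8 * K * L / m"
      by linarith
    then show "(gradU x - gradU y) \<bullet> (x - y) \<ge> (m / 2) * (norm (x - y))\<^sup>2"
    proof cases
      case 1
      then show ?thesis by (rule far_monotone)
    next
      case 2
      from far_monotone[OF this, of x] show ?thesis
        by (simp add: norm_minus_commute inner_diff_left inner_diff_right inner_commute)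
    qed
  qed
qed

end
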